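(* Let $a,g,h$ be positive integers with $\sigma(a)\neq 2a$, and let $b,c$ be coprime integers with $c>0$ and $\dfrac{b}{c}=\dfrac{a}{2a-\sigma(a)}$. Let $m,n$ be coprime positive integers with $\dfrac{\sigma(g)}{\sigma(h)}=\dfrac{m}{n}$, and put $e=b(mh+ng)-(2b-c)m\,\sigma(h)$, assumed nonzero. Let $x,y$ be positive integers with $$(ex-nbg)(ey-nbg)=n^2b^2g^2+nb(h-g)e,$$ and put $p=x-1$, $q=y-1$, $r=\frac{m}{n}xy-1$. Suppose $p,q,r$ are primes with $p\neq q$, and that the factors are relatively prime: $a,g,p,q$ are pairwise coprime and $a,h,r$ are pairwise coprime. Then $agpq$ and $ahr$ are amicable numbers.
   Context: For a positive integer $N$, $\sigma(N)$ denotes the sum of all positive divisors of $N$. Positive integers $M,N$ are amicable if $\sigma(M)-M=N$ and $\sigma(N)-N=M$. *)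

theory Defs
  imports Complex_Main "HOL-Computational_Algebra.Primes"
begin

definition sigma :: "nat \<Rightarrow> nat" where
  "sigma N = (\<Sum>d\<in>{d. d dvd N}. d)"

definition amicable :: "nat \<Rightarrow> nat \<Rightarrow> bool" where
  "amicable M N \<longleftrightarrow> M > 0 \<and> N > 0 \<and>
     int (sigma M) - int M = int N \<and> int (sigma N) - int N = int M"

end

(* sigma is multiplicative, so with x = p + 1, y = q + 1 and r + 1 = (m/n) x y one gets
   sigma(agpq) = sigma(a) sigma(g) x y = sigma(a) sigma(h) (r + 1) = sigma(ahr), and amicability
   reduces to sigma(a) sigma(g) x y = agpq + ahr.  Substituting sigma(a) = a(2b - c)/b and
   sigma(g) = m sigma(h)/n and clearing the factor a/(bn), this is the bilinear relation
   e x y - nbg (x + y) = nb (h - g), i.e. the hyperbola equation divided by e. *)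
theory Submission
  imports Defs
begin

lemma gcd_divisor_product_eq:
  fixes m n u v :: nat
  assumes "coprime m n" "u dvd m" "v dvd n"
  shows "gcd (u * v) m = u"
proof -
  have "coprime m v"
    using coprime_divisors[OF dvd_refl assms(3) assms(1)] .
  then have "gcd (u * v) m = gcd u m"
    by (rule gcd_mult_left_right_cancel)
  also have "\<dots> = u"
    using assms(2) by (simp add: gcd_nat.absorb1)
  finally show ?thesis .
qed

lemma bij_betw_mult_divisors:
  fixes m n :: nat
  assumes "coprime m n"
  shows "bij_betw (\<lambda>(u, v). u * v) ({u. u dvd m} \<times> {v. v dvd n}) {d. d dvd m * n}"
  unfolding bij_betw_def
proof
  show "inj_on (\<lambda>(u, v). u * v) ({u. u dvd m} \<times> {v. v dvd n})"
  proof (rule inj_onI)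
    fix z z'
    assume "z \<in> {u. u dvd m} \<times> {v. v dvd n}" "z' \<in> {u. u dvd m} \<times> {v. v dvd n}"
      and "(\<lambda>(u, v). u * v) z = (\<lambda>(u, v). u * v) z'"
    then obtain u v u' v' where z: "z = (u, v)" "z' = (u', v')"
      and dvd: "u dvd m" "v dvd n" "u' dvd m" "v' dvd n" and eq: "u * v = u' * v'"
      by auto
    have "coprime n m"
      using assms by (simp add: coprime_commute)
    have "u = u'"
      using gcd_divisor_product_eq[OF assms dvd(1,2)] gcd_divisor_product_eq[OF assms dvd(3,4)] eq
      by simp
    moreover have "v = v'"
      using gcd_divisor_product_eq[OF \<open>coprime n m\<close> dvd(2,1)]
        gcd_divisor_product_eq[OF \<open>coprime n m\<close> dvd(4,3)] eq
      by (simp add: mult.commute)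
    ultimately show "z = z'"
      using z by simp
  qed
  show "(\<lambda>(u, v). u * v) ` ({u. u dvd m} \<times> {v. v dvd n}) = {d. d dvd m * n}"
  proof (intro equalityI subsetI)
    fix d assume "d \<in> (\<lambda>(u, v). u * v) ` ({u. u dvd m} \<times> {v. v dvd n})"
    then obtain u v where "d = u * v" "u dvd m" "v dvd n"
      by auto
    then show "d \<in> {d. d dvd m * n}"
      by (simp add: mult_dvd_mono)
  next
    fix d assume "d \<in> {d. d dvd m * n}"
    then obtain u v where "d = u * v" "u dvd m" "v dvd n"
      using division_decomp by blast
    then show "d \<in> (\<lambda>(u, v). u * v) ` ({u. u dvd m} \<times> {v. v dvd n})"
      by (intro image_eqI[of _ _ "(u, v)"]) simp_all
  qed
qed

(* the divisors of 0 form an infinite set, over which the sum is the junk value 0 *)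
lemma sigma_0 [simp]: "sigma 0 = 0"
  by (simp add: sigma_def)

lemma sigma_pos:
  assumes "N > 0"
  shows "sigma N > 0"
proof -
  have "1 \<le> (\<Sum>d\<in>{d. d dvd N}. d)"
    using assms by (intro member_le_sum) simp_all
  then show ?thesis
    by (simp add: sigma_def)
qed

lemma sigma_prime:
  assumes "prime p"
  shows "sigma p = p + 1"
proof -
  have "{d. d dvd p} = {1, p}" "p \<noteq> 1"
    using assms by (auto simp: prime_nat_iff)
  then show ?thesis
    by (simp add: sigma_def)
qed

lemma sigma_mult:
  fixes m n :: nat
  assumes "coprime m n"
  shows "sigma (m * n) = sigma m * sigma n"
proof (cases "m = 0 \<or> n = 0")
  case True
  then show ?thesis
    by auto
next
  case False
  then have "finite {u. u dvd m}" "finite {v. v dvd n}"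
    by simp_all
  then have "sigma m * sigma n = (\<Sum>(u, v) \<in> {u. u dvd m} \<times> {v. v dvd n}. u * v)"
    by (simp add: sigma_def sum_product sum.cartesian_product)
  also have "\<dots> = sigma (m * n)"
    unfolding sigma_def by (rule sum.reindex_bij_betw[OF bij_betw_mult_divisors[OF assms]])
  finally show ?thesis ..
qed

lemma amicable_iff_sigma:
  "M > 0 \<Longrightarrow> N > 0 \<Longrightarrow> amicable M N \<longleftrightarrow> sigma M = M + N \<and> sigma N = M + N"
  unfolding amicable_def by linarith

lemma hyperbola_imp_bilinear:
  fixes e x y k l :: "'a::idom"
  assumes "e \<noteq> 0" and "(e * x - k) * (e * y - k) = k\<^sup>2 + l * e"
  shows "e * x * y - k * (x + y) = l"
proof -
  have "e * (e * x * y - k * (x + y) - l) = 0"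
    using assms(2) by (simp add: algebra_simps power2_eq_square)
  then show ?thesis
    using assms(1) by simp
qed

lemma cross_multiply_abundancy:
  fixes A S B C :: "'a::field"
  assumes "S \<noteq> 2 * A" "C \<noteq> 0" "B / C = A / (2 * A - S)"
  shows "B * S = A * (2 * B - C)"
proof -
  have "2 * A - S \<noteq> 0"
    using assms(1) by simp
  then show ?thesis
    using assms(2,3) by (simp add: field_simps)
qed

lemma amicable_sum_identity:
  fixes A G H Sa Sg Sh B C M N E X Y :: "'a::field"
  assumes "A \<noteq> 0" "C \<noteq> 0" "N \<noteq> 0" "E \<noteq> 0"
    and sigma_a: "B * Sa = A * (2 * B - C)"
    and sigma_ratio: "Sg = Sh * M / N"
    and E: "E = B * (M * H + N * G) - (2 * B - C) * M * Sh"
    and hyperbola: "(E * X - N * B * G) * (E * Y - N * B * G)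
      = (N * B * G)\<^sup>2 + N * B * (H - G) * E"
  shows "Sa * Sg * X * Y = A * G * (X - 1) * (Y - 1) + A * H * (M / N * X * Y - 1)"
proof -
  have "B \<noteq> 0"
    using sigma_a assms(1,2) by auto
  have bilinear: "E * X * Y - N * B * G * (X + Y) = N * B * (H - G)"
    using hyperbola_imp_bilinear[OF \<open>E \<noteq> 0\<close> hyperbola] .
  have "Sg * N = Sh * M"
    using \<open>N \<noteq> 0\<close> unfolding sigma_ratio by simp
  have "B * N * (Sa * Sg * X * Y) = (B * Sa) * (Sg * N) * X * Y"
    by (simp add: ac_simps)
  also have "\<dots> = A * (2 * B - C) * M * Sh * X * Y"
    unfolding sigma_a \<open>Sg * N = Sh * M\<close> by (simp add: ac_simps)
  also have "\<dots> = B * N * (A * G * (X - 1) * (Y - 1) + A * H * (M / N * X * Y - 1))"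
  proof -
    have "A * (2 * B - C) * M * Sh * X * Y
            - B * N * (A * G * (X - 1) * (Y - 1) + A * H * (M / N * X * Y - 1))
          = A * (N * B * (H - G) - (E * X * Y - N * B * G * (X + Y)))"
      using \<open>N \<noteq> 0\<close> unfolding E by (simp add: field_simps)
    then show ?thesis
      using bilinear by simp
  qed
  finally show ?thesis
    using \<open>B \<noteq> 0\<close> \<open>N \<noteq> 0\<close> by simp
qed

theorem mainTheorem10:
  fixes a g h m n x y p q r :: nat and b c e :: int
  assumes pos: "a > 0" "g > 0" "h > 0"
    and not_perfect: "sigma a \<noteq> 2 * a"
    and bc: "coprime b c" "c > 0"
    and bc_eq: "rat_of_int b / rat_of_int c = of_nat a / (2 * of_nat a - of_nat (sigma a))"
    and mn: "coprime m n" "m > 0" "n > 0"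
    and mn_eq: "rat_of_nat (sigma g) / rat_of_nat (sigma h) = rat_of_nat m / rat_of_nat n"
    and e_def: "e = b * (int m * int h + int n * int g) - (2 * b - c) * int m * int (sigma h)"
    and e_nz: "e \<noteq> 0"
    and xy: "x > 0" "y > 0"
    and eqn: "(e * int x - int n * b * int g) * (e * int y - int n * b * int g)
              = (int n)^2 * b^2 * (int g)^2 + int n * b * (int h - int g) * e"
    and p_def: "p = x - 1" and q_def: "q = y - 1"
    and r_def: "rat_of_nat r = rat_of_nat m / rat_of_nat n * rat_of_nat x * rat_of_nat y - 1"
    and primes: "prime p" "prime q" "prime r" "p \<noteq> q"
    and cop1: "coprime a g" "coprime a p" "coprime a q" "coprime g p" "coprime g q" "coprime p q"
    and cop2: "coprime a h" "coprime a r" "coprime h r"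
  shows "amicable (a * g * p * q) (a * h * r)"
proof -
  have x: "x = p + 1" and y: "y = q + 1"
    using xy p_def q_def by simp_all
  have sigma_M: "sigma (a * g * p * q) = sigma a * sigma g * x * y"
    using cop1 primes by (simp add: sigma_mult sigma_prime x y)
  have sigma_N: "sigma (a * h * r) = sigma a * sigma h * (r + 1)"
    using cop2 primes by (simp add: sigma_mult sigma_prime)
  have sigma_g: "of_nat (sigma g) = of_nat (sigma h) * of_nat m / (of_nat n :: rat)"
    using mn_eq sigma_pos[OF pos(3)] mn(3) by (simp add: field_simps)
  have "of_nat (sigma a) \<noteq> 2 * (of_nat a :: rat)"
    using not_perfect of_nat_eq_iff[of "sigma a" "2 * a", where 'a = rat] by simp
  then have sigma_a: "of_int b * of_nat (sigma a) = of_nat a * (2 * of_int b - (of_int c :: rat))"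
    by (rule cross_multiply_abundancy) (use bc_eq bc(2) in simp_all)
  have hyperbola: "(of_int e * of_nat x - of_nat n * of_int b * of_nat g)
      * (of_int e * of_nat y - of_nat n * of_int b * of_nat g)
      = (of_nat n * of_int b * of_nat g)\<^sup>2
        + of_nat n * of_int b * (of_nat h - of_nat g) * (of_int e :: rat)"
    using arg_cong[OF eqn, of rat_of_int] by (simp add: power_mult_distrib)
  have E: "of_int e = of_int b * (of_nat m * of_nat h + of_nat n * of_nat g)
      - (2 * of_int b - of_int c) * of_nat m * (of_nat (sigma h) :: rat)"
    using e_def by simp
  have "of_nat (sigma a) * of_nat (sigma g) * of_nat x * of_nat y
      = of_nat a * of_nat g * (of_nat x - 1) * (of_nat y - 1)
        + of_nat a * of_nat h * (of_nat m / of_nat n * of_nat x * of_nat y - (1 :: rat))"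
    by (rule amicable_sum_identity[OF _ _ _ _ sigma_a sigma_g E hyperbola])
      (use pos(1) bc(2) mn(3) e_nz in simp_all)
  then have sigma_M_eq: "rat_of_nat (sigma (a * g * p * q)) = of_nat (a * g * p * q + a * h * r)"
    unfolding sigma_M of_nat_add of_nat_mult r_def using x y by simp
  have r_succ: "rat_of_nat (r + 1) = of_nat m / of_nat n * of_nat x * of_nat y"
    using r_def by simp
  have "rat_of_nat (sigma (a * h * r)) = of_nat (sigma (a * g * p * q))"
    unfolding sigma_M sigma_N of_nat_mult r_succ sigma_g by (simp add: mult_ac)
  with sigma_M_eq have "sigma (a * h * r) = sigma (a * g * p * q)"
    and "sigma (a * g * p * q) = a * g * p * q + a * h * r"
    by (simp_all only: of_nat_eq_iff)
  then show ?thesis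
    using pos primes by (simp add: amicable_iff_sigma prime_gt_0_nat)
qed

end
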